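(* Let $n\ge3$. In $\mathrm{YTL}_{d,n}(u)$ we have (1) $(t_i-t_j)(t_i-t_k)(t_j-t_k)=0$ for all $1\le i,j,k\le n$; and (2) $(t_j-t_i)(t_j-t_{i+1})(g_i+1)=0$ for all $1\le i\le n-1$ and $1\le j\le n$.
   Context: Let $d,n\ge1$ be integers and $u$ an indeterminate. The Yokonuma–Hecke algebra $\mathrm{Y}_{d,n}(u)$ is the associative $\mathbb{C}[u,u^{-1}]$-algebra generated by $g_1,\dots,g_{n-1},t_1,\dots,t_n$ subject to: $g_ig_j=g_jg_i$ for $|i-j|>1$; $g_ig_{i+1}g_i=g_{i+1}g_ig_{i+1}$ for $1\le i\le n-2$; $t_it_j=t_jt_i$ for all $i,j$; $t_jg_i=g_it_{s_i(j)}$ for all $i,j$, where $s_i$ is the transposition $(i,i+1)$; $t_j^d=1$ for all $j$; and $g_i^2=1+(u-1)e_i+(u-1)e_ig_i$, where $e_i=\frac1d\sum_{s=0}^{d-1}t_i^st_{i+1}^{-s}$. For $n\ge3$, the Yokonuma–Temperley–Lieb algebra $\mathrm{YTL}_{d,n}(u)$ is the quotient of $\mathrm{Y}_{d,n}(u)$ by the two-sided ideal generated by the elements $g_ig_{i+1}g_i+g_ig_{i+1}+g_{i+1}g_i+g_i+g_{i+1}+1$, $1\le i\le n-2$; images of the generators in the quotient are denoted by the same letters. *)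

theory Defs
  imports Complex_Main
begin

definition s_tr :: "nat \<Rightarrow> nat \<Rightarrow> nat" where
  "s_tr i j = (if j = i then i + 1 else if j = i + 1 then i else j)"

(* A unital C[u,u^{-1}]-algebra structure on a ring 'a:
   phi : C -> 'a is a unital ring homomorphism with central image,
   u is a central unit of 'a.  (This is exactly a unital C[u,u^{-1}]-algebra.) *)
definition laurent_alg :: "(complex \<Rightarrow> 'a::ring_1) \<Rightarrow> 'a \<Rightarrow> bool" where
  "laurent_alg phi u \<longleftrightarrow>
     phi 1 = 1 \<and> (\<forall>a b. phi (a + b) = phi a + phi b) \<and> (\<forall>a b. phi (a * b) = phi a * phi b) \<and>
     (\<forall>a x. phi a * x = x * phi a) \<and>
     (\<forall>x. u * x = x * u) \<and> (\<exists>v. u * v = 1 \<and> v * u = 1)"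

(* e_i = (1/d) sum_{s=0}^{d-1} t_i^s t_{i+1}^{-s}; since t_{i+1}^d = 1,
   the inverse of t_{i+1}^s is t_{i+1}^(d-s). *)
definition e_idem :: "(complex \<Rightarrow> 'a::ring_1) \<Rightarrow> nat \<Rightarrow> (nat \<Rightarrow> 'a) \<Rightarrow> nat \<Rightarrow> 'a" where
  "e_idem phi d t i = phi (1 / of_nat d) * (\<Sum>s<d. t i ^ s * t (i + 1) ^ (d - s))"

definition YTL_rels ::
  "(complex \<Rightarrow> 'a::ring_1) \<Rightarrow> 'a \<Rightarrow> nat \<Rightarrow> nat \<Rightarrow> (nat \<Rightarrow> 'a) \<Rightarrow> (nat \<Rightarrow> 'a) \<Rightarrow> bool" where
  "YTL_rels phi u d n g t \<longleftrightarrow>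
     (\<forall>i j. 1 \<le> i \<and> i \<le> n - 1 \<and> 1 \<le> j \<and> j \<le> n - 1 \<and> (i + 1 < j \<or> j + 1 < i)
        \<longrightarrow> g i * g j = g j * g i) \<and>
     (\<forall>i. 1 \<le> i \<and> i \<le> n - 2 \<longrightarrow> g i * g (i+1) * g i = g (i+1) * g i * g (i+1)) \<and>
     (\<forall>i j. 1 \<le> i \<and> i \<le> n \<and> 1 \<le> j \<and> j \<le> n \<longrightarrow> t i * t j = t j * t i) \<and>
     (\<forall>i j. 1 \<le> i \<and> i \<le> n - 1 \<and> 1 \<le> j \<and> j \<le> n \<longrightarrow> t j * g i = g i * t (s_tr i j)) \<and>
     (\<forall>j. 1 \<le> j \<and> j \<le> n \<longrightarrow> t j ^ d = 1) \<and>
     (\<forall>i. 1 \<le> i \<and> i \<le> n - 1 \<longrightarrow>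
        g i * g i = 1 + (u - 1) * e_idem phi d t i + (u - 1) * e_idem phi d t i * g i) \<and>
     (\<forall>i. 1 \<le> i \<and> i \<le> n - 2 \<longrightarrow>
        g i * g (i+1) * g i + g i * g (i+1) + g (i+1) * g i + g i + g (i+1) + 1 = 0)"

end

theory Submission
  imports Defs
begin

(* Since t_j g_m = g_m t_(s_m j), conjugation by g_m transports a relation among the t's along
   the transposition s_m, and g_m is left-cancellable thanks to its quadratic relation and the
   idempotence of e_m.  Both identities hold for consecutive indices i, i+1, i+2 by a direct
   computation from the six-term relation of YTL, and adjacent transpositions that fix the
   remaining indices then move the indices to arbitrary positions. *)

lemma power_mult_commuting:
  fixes a b :: "'a::monoid_mult"
  assumes "a * b = b * a"
  shows "(a * b) ^ k = a ^ k * b ^ k"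
proof (induction k)
  case (Suc k)
  have "(a * b) ^ Suc k = a ^ k * (b ^ k * a) * b"
    by (simp only: power_Suc2 Suc mult.assoc)
  also have "b ^ k * a = a * b ^ k"
    using power_commuting_commutes[of b a k] assms by simp
  finally show ?case by (simp only: power_Suc2 mult.assoc)
qed simp

lemma power_diff_eq_power_pred_power:
  fixes a b :: "'a::monoid_mult"
  assumes "b ^ d = 1" "s \<le> d"
  shows "b ^ (d - s) = (b ^ (d - 1)) ^ s"
proof (cases s)
  case (Suc r)
  have "(d - 1) * s = (d - s) + d * r" using assms(2) Suc by (simp add: algebra_simps)
  moreover have "b ^ (d * r) = 1" using assms(1) by (simp add: power_mult)
  ultimately show ?thesis by (simp add: power_add flip: power_mult)
qed (simp add: assms)

lemma mult_geometric_sum_eq_self: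
  fixes c :: "'a::ring_1"
  assumes "c ^ d = 1"
  shows "c * (\<Sum>s<d. c ^ s) = (\<Sum>s<d. c ^ s)"
proof -
  have "1 + c * (\<Sum>s<d. c ^ s) = (\<Sum>s<Suc d. c ^ s)"
    by (simp add: sum_distrib_left sum.lessThan_Suc_shift del: sum.lessThan_Suc)
  also have "\<dots> = (\<Sum>s<d. c ^ s) + 1" using assms by simp
  finally show ?thesis by (simp add: add.commute)
qed

lemma geometric_sum_square:
  fixes c :: "'a::ring_1"
  assumes "c ^ d = 1"
  defines "S \<equiv> \<Sum>s<d. c ^ s"
  shows "S * S = of_nat d * S"
proof -
  have absorb: "c ^ k * S = S" for k
    by (induction k) (simp_all add: mult.assoc mult_geometric_sum_eq_self[OF assms(1)] S_def)
  have "S * S = (\<Sum>s<d. c ^ s * S)" by (simp add: S_def sum_distrib_right)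
  also have "\<dots> = of_nat d * S" by (simp add: absorb)
  finally show ?thesis .
qed

lemma cyclic_sum_square:
  fixes a b :: "'a::ring_1"
  assumes "a * b = b * a" "a ^ d = 1" "b ^ d = 1"
  shows "(\<Sum>s<d. a ^ s * b ^ (d - s)) * (\<Sum>s<d. a ^ s * b ^ (d - s))
    = of_nat d * (\<Sum>s<d. a ^ s * b ^ (d - s))"
proof -
  txt \<open>As b ^ (d - 1) is the inverse of b, the sum is geometric with ratio a b ^ (d - 1).\<close>
  define c where "c = a * b ^ (d - 1)"
  have "a * b ^ (d - 1) = b ^ (d - 1) * a"
    using power_commuting_commutes assms(1) by metis
  then have "c ^ s = a ^ s * (b ^ (d - 1)) ^ s" for s
    unfolding c_def by (rule power_mult_commuting)
  then have summand: "a ^ s * b ^ (d - s) = c ^ s" if "s \<le> d" for s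
    using that assms(3) by (simp add: power_diff_eq_power_pred_power)
  have "c ^ d = 1" using summand[of d] assms(2) by simp
  moreover have "(\<Sum>s<d. a ^ s * b ^ (d - s)) = (\<Sum>s<d. c ^ s)"
    by (rule sum.cong[OF refl summand]) simp
  ultimately show ?thesis using geometric_sum_square by simp
qed

lemma quadratic_relation_left_cancel:
  fixes g e u v q :: "'a::ring_1"
  assumes quadratic: "g * g = 1 + (u - 1) * e + (u - 1) * e * g"
    and idem: "e * e = e" and central: "u * e = e * u" and unit: "v * u = 1"
    and "g * q = 0"
  shows "q = 0"
proof -
  have "(g * g) * q = 0" using \<open>g * q = 0\<close> by (simp add: mult.assoc)
  then have q: "q + (u - 1) * (e * q) = 0"
    using \<open>g * q = 0\<close> by (simp add: quadratic algebra_simps)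
  have "e * (u - 1) = (u - 1) * e" using central by (simp add: algebra_simps)
  then have "e * ((u - 1) * (e * q)) = (u - 1) * (e * q)"
    by (metis mult.assoc idem)
  then have "e * (q + (u - 1) * (e * q)) = u * (e * q)"
    by (simp add: distrib_left algebra_simps)
  then have "u * (e * q) = 0" using q by simp
  then have "e * q = 0" by (metis unit mult.assoc mult_1 mult_zero_right)
  then show "q = 0" using q by simp
qed

lemma diff_intertwine:
  fixes a a' b b' g :: "'a::ring_1"
  shows "a * g = g * a' \<Longrightarrow> b * g = g * b' \<Longrightarrow> (a - b) * g = g * (a' - b')"
  by (simp add: algebra_simps)

lemma mult_intertwine:
  fixes a a' b b' g :: "'a::semigroup_mult"
  shows "a * g = g * a' \<Longrightarrow> b * g = g * b' \<Longrightarrow> (a * b) * g = g * (a' * b')"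
  by (metis mult.assoc)

definition vandermonde3 :: "'a::ring_1 \<Rightarrow> 'a \<Rightarrow> 'a \<Rightarrow> 'a" where
  "vandermonde3 x y z = (x - y) * (x - z) * (y - z)"

lemma vandermonde3_swap12:
  fixes x y z :: "'a::ring_1"
  assumes "x * y = y * x" "x * z = z * x" "y * z = z * y"
  shows "vandermonde3 y x z = - vandermonde3 x y z"
proof -
  have "(y - z) * (x - z) = (x - z) * (y - z)" using assms by (simp add: algebra_simps)
  then show ?thesis unfolding vandermonde3_def
    by (metis minus_diff_eq mult.assoc mult_minus_left)
qed

lemma vandermonde3_swap23:
  fixes x y z :: "'a::ring_1"
  assumes "x * y = y * x" "x * z = z * x" "y * z = z * y"
  shows "vandermonde3 x z y = - vandermonde3 x y z"
proof -
  have "(x - z) * (x - y) = (x - y) * (x - z)" using assms by (simp add: algebra_simps)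
  then show ?thesis unfolding vandermonde3_def
    by (metis minus_diff_eq mult_minus_right)
qed

lemma six_term_relation_consequences:
  fixes a b c g1 g2 :: "'a::ring_1"
  assumes ab: "a * b = b * a" and ac: "a * c = c * a" and bc: "b * c = c * b"
    and ag1: "a * g1 = g1 * b" and bg1: "b * g1 = g1 * a" and cg1: "c * g1 = g1 * c"
    and ag2: "a * g2 = g2 * a" and bg2: "b * g2 = g2 * c" and cg2: "c * g2 = g2 * b"
    and six_term: "g1 * g2 * g1 + g1 * g2 + g2 * g1 + g1 + g2 + 1 = 0"
  shows "vandermonde3 a b c = 0"
    and "(c - a) * (c - b) * (g1 + 1) = 0"
    and "(a - b) * (a - c) * (g2 + 1) = 0"
proof -
  have left_comm: "\<And>r. a * (b * r) = b * (a * r)" "\<And>r. a * (c * r) = c * (a * r)"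
    "\<And>r. b * (c * r) = c * (b * r)"
    "\<And>r. a * (g1 * r) = g1 * (b * r)" "\<And>r. b * (g1 * r) = g1 * (a * r)"
    "\<And>r. c * (g1 * r) = g1 * (c * r)"
    "\<And>r. a * (g2 * r) = g2 * (a * r)" "\<And>r. b * (g2 * r) = g2 * (c * r)"
    "\<And>r. c * (g2 * r) = g2 * (b * r)"
    by (metis mult.assoc assms)+
  note rules = left_comm ab ac bc ag1 bg1 cg1 ag2 bg2 cg2
  txt \<open>Pushing a, b or c to the right through a word w in g1, g2 permutes them by the image
    of w in S_3, and the six words of X are exactly the elements of S_3.  In
    c (c X - X b) - (c X - X b) a the word w therefore contributes w (w(c) - b) (w(c) - a),
    which vanishes unless w fixes c, i.e. unless w is 1 or g1; the other two identities
    arise in the same way.\<close>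
  define X where "X = g1 * g2 * g1 + g1 * g2 + g2 * g1 + g1 + g2 + 1"
  have "vandermonde3 a b c
      = c * (c * (X * a - b * X) - (X * a - b * X) * b)
        - (c * (X * a - b * X) - (X * a - b * X) * b) * a"
    unfolding X_def vandermonde3_def by (simp add: algebra_simps rules)
  then show "vandermonde3 a b c = 0" using six_term by (simp add: X_def)
  have "(c - a) * (c - b) * (g1 + 1) = c * (c * X - X * b) - (c * X - X * b) * a"
    unfolding X_def by (simp add: algebra_simps rules)
  then show "(c - a) * (c - b) * (g1 + 1) = 0" using six_term by (simp add: X_def)
  have "(a - b) * (a - c) * (g2 + 1) = a * (a * X - X * b) - (a * X - X * b) * c"
    unfolding X_def by (simp add: algebra_simps rules)
  then show "(a - b) * (a - c) * (g2 + 1) = 0" using six_term by (simp add: X_def)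
qed

lemma generator_index_iff: "(i::nat) \<in> {1..<n} \<longleftrightarrow> 1 \<le> i \<and> i \<le> n - 1"
  by auto

locale YTL_algebra =
  fixes phi :: "complex \<Rightarrow> 'a::ring_1" and u :: 'a and d n :: nat
    and g t :: "nat \<Rightarrow> 'a"
  assumes laurent: "laurent_alg phi u" and rels: "YTL_rels phi u d n g t"
begin

lemma g_far_commute:
  "i \<in> {1..<n} \<Longrightarrow> j \<in> {1..<n} \<Longrightarrow> i + 1 < j \<or> j + 1 < i \<Longrightarrow>
    g i * g j = g j * g i"
  using rels unfolding YTL_rels_def generator_index_iff by blast

lemma t_commute: "i \<in> {1..n} \<Longrightarrow> j \<in> {1..n} \<Longrightarrow> t i * t j = t j * t i"
  using rels unfolding YTL_rels_def by simp

lemma t_g_intertwine: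
  "i \<in> {1..<n} \<Longrightarrow> j \<in> {1..n} \<Longrightarrow> t j * g i = g i * t (s_tr i j)"
  using rels unfolding YTL_rels_def generator_index_iff atLeastAtMost_iff by blast

lemma t_pow_d: "j \<in> {1..n} \<Longrightarrow> t j ^ d = 1"
  using rels unfolding YTL_rels_def by simp

lemma g_quadratic: "i \<in> {1..<n} \<Longrightarrow>
    g i * g i = 1 + (u - 1) * e_idem phi d t i + (u - 1) * e_idem phi d t i * g i"
  using rels unfolding YTL_rels_def generator_index_iff by blast

lemma g_six_term: "1 \<le> i \<Longrightarrow> i \<le> n - 2 \<Longrightarrow>
    g i * g (i + 1) * g i + g i * g (i + 1) + g (i + 1) * g i + g i + g (i + 1) + 1 = 0"
  using rels unfolding YTL_rels_def by blast

lemma phi_central: "phi a * x = x * phi a"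
  using laurent unfolding laurent_alg_def by blast

lemma phi_mult: "phi (a * b) = phi a * phi b"
  using laurent unfolding laurent_alg_def by blast

lemma phi_one: "phi 1 = 1"
  using laurent unfolding laurent_alg_def by blast

lemma phi_of_nat: "phi (of_nat k) = of_nat k"
proof -
  have add: "phi (a + b) = phi a + phi b" for a b
    using laurent unfolding laurent_alg_def by blast
  have "phi 0 = 0" using add[of 0 0] by simp
  then show ?thesis by (induction k) (simp_all add: add phi_one)
qed

lemma u_central: "u * x = x * u"
  using laurent unfolding laurent_alg_def by blast

lemma u_left_invertible: "\<exists>v. v * u = 1"
  using laurent unfolding laurent_alg_def by blast

lemma e_idem_idem:
  assumes "i \<in> {1..<n}"
  shows "e_idem phi d t i * e_idem phi d t i = e_idem phi d t i"
proof (cases "d = 0")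
  case False
  define S where "S = (\<Sum>s<d. t i ^ s * t (i + 1) ^ (d - s))"
  have "S * S = of_nat d * S"
    unfolding S_def using assms by (intro cyclic_sum_square t_commute t_pow_d) auto
  moreover have "phi (1 / of_nat d) * of_nat d = phi (1 / of_nat d * of_nat d)"
    by (simp only: phi_mult phi_of_nat)
  ultimately have "phi (1 / of_nat d) * (phi (1 / of_nat d) * (S * S)) = phi (1 / of_nat d) * S"
    using False by (simp add: phi_one flip: mult.assoc)
  moreover have "phi (1 / of_nat d) * S * (phi (1 / of_nat d) * S)
      = phi (1 / of_nat d) * (phi (1 / of_nat d) * (S * S))"
    by (metis mult.assoc phi_central)
  ultimately show ?thesis unfolding e_idem_def S_def by simp
qed (simp add: e_idem_def)

lemma g_left_cancel:
  assumes "m \<in> {1..<n}" "g m * q = 0"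
  shows "q = 0"
proof -
  obtain v where "v * u = 1" using u_left_invertible by blast
  with assms show ?thesis
    using quadratic_relation_left_cancel[OF g_quadratic e_idem_idem u_central] by blast
qed

lemma vandermonde_conj:
  assumes "m \<in> {1..<n}" "x \<in> {1..n}" "y \<in> {1..n}" "z \<in> {1..n}"
    and "vandermonde3 (t x) (t y) (t z) = 0"
  shows "vandermonde3 (t (s_tr m x)) (t (s_tr m y)) (t (s_tr m z)) = 0"
proof (rule g_left_cancel[OF assms(1)])
  have "vandermonde3 (t x) (t y) (t z) * g m
      = g m * vandermonde3 (t (s_tr m x)) (t (s_tr m y)) (t (s_tr m z))"
    unfolding vandermonde3_def using assms(1-4)
    by (intro mult_intertwine diff_intertwine t_g_intertwine)
  then show "g m * vandermonde3 (t (s_tr m x)) (t (s_tr m y)) (t (s_tr m z)) = 0"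
    using assms(5) by simp
qed

lemma consecutive_relations:
  assumes "1 \<le> i" "i + 2 \<le> n"
  shows "vandermonde3 (t i) (t (i + 1)) (t (i + 2)) = 0"
    and "(t (i + 2) - t i) * (t (i + 2) - t (i + 1)) * (g i + 1) = 0"
    and "(t i - t (i + 1)) * (t i - t (i + 2)) * (g (i + 1) + 1) = 0"
proof -
  have gens: "i \<in> {1..<n}" "i + 1 \<in> {1..<n}"
    and idx: "i \<in> {1..n}" "i + 1 \<in> {1..n}" "i + 2 \<in> {1..n}"
    using assms by auto
  have move: "t i * g i = g i * t (i + 1)" "t (i + 1) * g i = g i * t i"
    "t (i + 2) * g i = g i * t (i + 2)" "t i * g (i + 1) = g (i + 1) * t i"
    "t (i + 1) * g (i + 1) = g (i + 1) * t (i + 2)"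
    "t (i + 2) * g (i + 1) = g (i + 1) * t (i + 1)"
    using t_g_intertwine[OF gens(1) idx(1)] t_g_intertwine[OF gens(1) idx(2)]
      t_g_intertwine[OF gens(1) idx(3)] t_g_intertwine[OF gens(2) idx(1)]
      t_g_intertwine[OF gens(2) idx(2)] t_g_intertwine[OF gens(2) idx(3)]
    by (simp_all add: s_tr_def)
  have "i \<le> n - 2" using assms by simp
  note consequences = six_term_relation_consequences[OF
      t_commute[OF idx(1,2)] t_commute[OF idx(1,3)] t_commute[OF idx(2,3)] move
      g_six_term[OF assms(1) this]]
  show "vandermonde3 (t i) (t (i + 1)) (t (i + 2)) = 0"
    and "(t (i + 2) - t i) * (t (i + 2) - t (i + 1)) * (g i + 1) = 0"
    and "(t i - t (i + 1)) * (t i - t (i + 2)) * (g (i + 1) + 1) = 0"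
    by (fact consequences)+
qed

lemma vandermonde_adjacent:
  assumes "1 \<le> i" "i + 2 \<le> r" "r \<le> n"
  shows "vandermonde3 (t i) (t (i + 1)) (t r) = 0"
  using assms(2)
proof (induction r rule: dec_induct)
  case base
  show ?case using consecutive_relations(1) assms by simp
next
  case (step m)
  have "vandermonde3 (t (s_tr m i)) (t (s_tr m (i + 1))) (t (s_tr m m)) = 0"
    using step assms by (intro vandermonde_conj) auto
  then show ?case using step.hyps by (simp add: s_tr_def)
qed

lemma vandermonde_increasing:
  assumes "1 \<le> p" "p < q" "q < r" "r \<le> n"
  shows "vandermonde3 (t p) (t q) (t r) = 0"
proof -
  define q' where "q' = q - 1"
  have "p \<le> q'" and q: "q = q' + 1" using assms(2) by (auto simp: q'_def)
  then show ?thesis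
  proof (induction p rule: inc_induct)
    case base
    show ?case using vandermonde_adjacent[of q' r] assms q by simp
  next
    case (step m)
    have "vandermonde3 (t (s_tr m (Suc m))) (t (s_tr m q)) (t (s_tr m r)) = 0"
      using step assms by (intro vandermonde_conj) auto
    then show ?case using step.hyps assms q by (simp add: s_tr_def)
  qed
qed

lemma vandermonde_vanishes:
  assumes "i \<in> {1..n}" "j \<in> {1..n}" "k \<in> {1..n}"
  shows "vandermonde3 (t i) (t j) (t k) = 0"
proof -
  have swap12:
      "vandermonde3 (t y) (t x) (t z) = 0 \<longleftrightarrow> vandermonde3 (t x) (t y) (t z) = 0" (is ?swap12)
    and swap23:
      "vandermonde3 (t x) (t z) (t y) = 0 \<longleftrightarrow> vandermonde3 (t x) (t y) (t z) = 0" (is ?swap23)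
    if "x \<in> {1..n}" "y \<in> {1..n}" "z \<in> {1..n}" for x y z
  proof -
    have commute: "t x * t y = t y * t x" "t x * t z = t z * t x" "t y * t z = t z * t y"
      using that by (auto intro: t_commute)
    show ?swap12 ?swap23
      using vandermonde3_swap12[OF commute] vandermonde3_swap23[OF commute] by simp_all
  qed
  have increasing: "vandermonde3 (t x) (t y) (t z) = 0"
    if "x < y" "y < z" "x \<in> {1..n}" "z \<in> {1..n}" for x y z
    using vandermonde_increasing that by simp
  consider "i = j \<or> i = k \<or> j = k" | "i < j" "j < k" | "i < k" "k < j" | "j < i" "i < k"
    | "j < k" "k < i" | "k < i" "i < j" | "k < j" "j < i"
    by linarith
  then show ?thesis
  proof cases
    case 1
    then show ?thesis unfolding vandermonde3_def by auto
  qed (use assms increasing swap12 swap23 in metis)+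
qed

lemma g_plus_one_annihilated_conj_far:
  assumes "i \<in> {1..<n}" "m \<in> {1..<n}" "i + 1 < m \<or> m + 1 < i" "j \<in> {1..n}"
    and "(t j - t i) * (t j - t (i + 1)) * (g i + 1) = 0"
  shows "(t (s_tr m j) - t i) * (t (s_tr m j) - t (i + 1)) * (g i + 1) = 0"
proof (rule g_left_cancel[OF assms(2)])
  have "t i * g m = g m * t i" "t (i + 1) * g m = g m * t (i + 1)"
    using t_g_intertwine[OF assms(2), of i] t_g_intertwine[OF assms(2), of "i + 1"]
      assms(1,3) by (auto simp: s_tr_def)
  moreover have "(g i + 1) * g m = g m * (g i + 1)"
    using g_far_commute[OF assms(1-3)] by (simp add: algebra_simps)
  ultimately have "(t j - t i) * (t j - t (i + 1)) * (g i + 1) * g m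
      = g m * ((t (s_tr m j) - t i) * (t (s_tr m j) - t (i + 1)) * (g i + 1))"
    using t_g_intertwine[OF assms(2,4)] by (intro mult_intertwine diff_intertwine)
  then show "g m * ((t (s_tr m j) - t i) * (t (s_tr m j) - t (i + 1)) * (g i + 1)) = 0"
    using assms(5) by simp
qed

lemma g_plus_one_annihilated_above:
  assumes "1 \<le> i" "i + 2 \<le> j" "j \<le> n"
  shows "(t j - t i) * (t j - t (i + 1)) * (g i + 1) = 0"
  using assms(2)
proof (induction j rule: dec_induct)
  case base
  show ?case using consecutive_relations(2) assms by simp
next
  case (step m)
  have "(t (s_tr m m) - t i) * (t (s_tr m m) - t (i + 1)) * (g i + 1) = 0"
    using step assms by (intro g_plus_one_annihilated_conj_far) auto
  then show ?case by (simp add: s_tr_def)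
qed

lemma g_plus_one_annihilated_below:
  assumes "1 \<le> j" "j < i" "i < n"
  shows "(t j - t i) * (t j - t (i + 1)) * (g i + 1) = 0"
proof -
  define i' where "i' = i - 1"
  have "j \<le> i'" and i: "i = i' + 1" using assms(2) by (auto simp: i'_def)
  then show ?thesis
  proof (induction j rule: inc_induct)
    case base
    show ?case using consecutive_relations(3)[of i'] assms i by simp
  next
    case (step m)
    have "(t (s_tr m (Suc m)) - t i) * (t (s_tr m (Suc m)) - t (i + 1)) * (g i + 1) = 0"
      using step assms i by (intro g_plus_one_annihilated_conj_far) auto
    then show ?case by (simp add: s_tr_def)
  qed
qed

lemma g_plus_one_annihilated:
  assumes "i \<in> {1..<n}" "j \<in> {1..n}"
  shows "(t j - t i) * (t j - t (i + 1)) * (g i + 1) = 0"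
proof -
  consider "j = i \<or> j = i + 1" | "i + 2 \<le> j" | "j < i" by linarith
  then show ?thesis
    using g_plus_one_annihilated_above g_plus_one_annihilated_below assms by cases auto
qed

end

theorem mainTheorem13:
  fixes phi :: "complex \<Rightarrow> 'a::ring_1" and u :: 'a
    and g t :: "nat \<Rightarrow> 'a" and d n :: nat
  assumes "d \<ge> 1" and "n \<ge> 3"
    and "laurent_alg phi u"
    and "YTL_rels phi u d n g t"
  shows "(\<forall>i j k. 1 \<le> i \<and> i \<le> n \<and> 1 \<le> j \<and> j \<le> n \<and> 1 \<le> k \<and> k \<le> n \<longrightarrow>
            (t i - t j) * (t i - t k) * (t j - t k) = 0) \<and>
         (\<forall>i j. 1 \<le> i \<and> i \<le> n - 1 \<and> 1 \<le> j \<and> j \<le> n \<longrightarrow>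
            (t j - t i) * (t j - t (i+1)) * (g i + 1) = 0)"
proof -
  interpret YTL_algebra phi u d n g t
    using assms(3,4) by unfold_locales
  show ?thesis
    using vandermonde_vanishes g_plus_one_annihilated
    unfolding vandermonde3_def atLeastAtMost_iff generator_index_iff by blast
qed

end
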